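(* Let $N\ge1$, let $\xi_0,\dots,\xi_N$ be the LGL nodes on $[-1,1]$ with LGL weights $\omega_0,\dots,\omega_N$, $\mathcal{M}=\mathrm{diag}(\omega_0,\dots,\omega_N)$, and let $\mathcal{V}_{ij}=L_j(\xi_i)$ ($i,j=0,\dots,N$) be the Vandermonde matrix of the normalized Legendre polynomials $L_j=\sqrt{(2j+1)/2}\,P_j$. Let $\mathcal{C}=\mathrm{diag}(\sigma_0,\dots,\sigma_N)$ be a diagonal (modal cutoff) matrix with real entries, and define the filter matrix $\mathcal{F}=\mathcal{V}\,\mathcal{C}\,\mathcal{V}^{-1}$ and the auxiliary filter matrix $\widetilde{\mathcal{F}}=\mathcal{M}^{-1}\mathcal{F}^T\mathcal{M}$. Then $\widetilde{\mathcal{F}}=\mathcal{F}$.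
   Context: The LGL nodes are $\xi_0=-1$, $\xi_N=1$ and the zeros of $P_N'$ (with $P_N$ the degree-$N$ Legendre polynomial); the LGL weights are $\omega_i=\frac{2}{N(N+1)P_N(\xi_i)^2}$. $\mathcal{V}$ is invertible since the $L_j$ form a basis of polynomials of degree $\le N$ and the nodes are distinct. *)

theory Defs
  imports Complex_Main "HOL-Computational_Algebra.Polynomial" "Jordan_Normal_Form.Gauss_Jordan_Elimination"
begin

fun legendre :: "nat \<Rightarrow> real poly" where
  "legendre 0 = 1"
| "legendre (Suc 0) = [:0, 1:]"
| "legendre (Suc (Suc n)) =
     Polynomial.smult (1 / real (n + 2))
       (Polynomial.smult (real (2 * n + 3)) ([:0, 1:] * legendre (Suc n)) - Polynomial.smult (real (n + 1)) (legendre n))"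

definition norm_legendre :: "nat \<Rightarrow> real \<Rightarrow> real" where
  "norm_legendre j x = sqrt ((2 * real j + 1) / 2) * poly (legendre j) x"

definition lgl_nodes :: "nat \<Rightarrow> real set" where
  "lgl_nodes N = {-1, 1} \<union> {x. poly (pderiv (legendre N)) x = 0}"

definition lgl_node :: "nat \<Rightarrow> nat \<Rightarrow> real" where
  "lgl_node N i = sorted_list_of_set (lgl_nodes N) ! i"

definition lgl_weight :: "nat \<Rightarrow> nat \<Rightarrow> real" where
  "lgl_weight N i = 2 / (real N * real (N + 1) * (poly (legendre N) (lgl_node N i))^2)"

definition diag_matrix :: "nat \<Rightarrow> (nat \<Rightarrow> real) \<Rightarrow> real mat" where
  "diag_matrix n d = mat n n (\<lambda>(i, j). if i = j then d i else 0)"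

definition mass_mat :: "nat \<Rightarrow> real mat" where
  "mass_mat N = diag_matrix (N + 1) (lgl_weight N)"

definition vander_mat :: "nat \<Rightarrow> real mat" where
  "vander_mat N = mat (N + 1) (N + 1) (\<lambda>(i, j). norm_legendre j (lgl_node N i))"

definition inv_mat :: "real mat \<Rightarrow> real mat" where
  "inv_mat A = the (mat_inverse A)"

definition filter_mat :: "nat \<Rightarrow> (nat \<Rightarrow> real) \<Rightarrow> real mat" where
  "filter_mat N \<sigma> = vander_mat N * diag_matrix (N + 1) \<sigma> * inv_mat (vander_mat N)"

definition aux_filter_mat :: "nat \<Rightarrow> (nat \<Rightarrow> real) \<Rightarrow> real mat" where
  "aux_filter_mat N \<sigma> = inv_mat (mass_mat N) * transpose_mat (filter_mat N \<sigma>) * mass_mat N"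

end

theory Submission
  imports Defs "Jordan_Normal_Form.Determinant"
begin

(* The LGL quadrature makes the normalized Legendre polynomials discretely orthogonal:
   V E V^T M = I with E = diag(1, ..., 1, N/(2N+1)), the only defect being the overestimated
   norm of L_N. Hence V^-1 = E V^T M, so F = V C E V^T M and M F = (M V) (C E) (M V)^T is
   symmetric, which is exactly M^-1 F^T M = F.
   The discrete orthogonality is the statement that the kernel
   K(x,y) = sum_(k<N) (2k+1) P_k(x) P_k(y) + N P_N(x) P_N(y) vanishes at pairs of distinct nodes and
   equals 2/omega at a node. Both follow from the Christoffel-Darboux formulas and the node equation
   P_(N-1)(xi) = xi P_N(xi), a rewriting of (1 - xi^2) P_N'(xi) = 0. That there are N+1 distinct nodes
   at all follows from the interlacing of the zeros of consecutive Legendre polynomials and Rolle's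
   theorem. *)

section \<open>Diagonal similarity of matrices\<close>

lemma inv_mat_eqI:
  assumes A: "A \<in> carrier_mat n n" and B: "B \<in> carrier_mat n n" and AB: "A * B = 1\<^sub>m n"
  shows "inv_mat A = B"
proof -
  have BA: "B * A = 1\<^sub>m n"
    using mat_mult_left_right_inverse[OF A B AB] .
  then have "A \<in> Units (ring_mat TYPE(real) n ())"
    using A B AB unfolding Units_def ring_mat_def by auto
  then obtain B' where B': "mat_inverse A = Some B'"
    using mat_inverse(1)[OF A] by fastforce
  then have AB': "A * B' = 1\<^sub>m n" and B'_carrier: "B' \<in> carrier_mat n n"
    using mat_inverse(2)[OF A] by auto
  have "B' = (B * A) * B'"
    using BA B'_carrier by simp
  also have "\<dots> = B"
    using A B B'_carrier AB' by simp
  finally show ?thesis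
    unfolding inv_mat_def B' by simp
qed

lemma diag_matrix_eq_mat_diag: "diag_matrix n d = mat_diag n d"
  unfolding diag_matrix_def mat_diag_def by (rule eq_matI) auto

lemma inv_mat_diag_matrix:
  assumes "\<And>i. i < n \<Longrightarrow> d i \<noteq> 0"
  shows "inv_mat (diag_matrix n d) = diag_matrix n (\<lambda>i. 1 / d i)"
proof (rule inv_mat_eqI)
  have "mat_diag n (\<lambda>i. d i * (1 / d i)) = mat_diag n (\<lambda>_. 1)"
    using assms by (intro eq_matI) (simp_all add: mat_diag_def)
  then show "diag_matrix n d * diag_matrix n (\<lambda>i. 1 / d i) = 1\<^sub>m n"
    by (simp add: diag_matrix_eq_mat_diag)
qed (simp_all add: diag_matrix_def)

lemma diag_matrix_transpose_diag_matrix_eq: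
  assumes "V \<in> carrier_mat n n"
  shows "diag_matrix n e * transpose_mat V * diag_matrix n w
    = mat n n (\<lambda>(k, j). e k * V $$ (j, k) * w j)"
proof -
  have "transpose_mat V \<in> carrier_mat n n"
    using assms by simp
  then have "mat_diag n e * transpose_mat V = mat n n (\<lambda>(k, j). e k * V $$ (j, k))"
    using assms by (subst mat_diag_mult_left) (auto intro!: eq_matI)
  then show ?thesis
    unfolding diag_matrix_eq_mat_diag by (subst mat_diag_mult_right[of _ n]) auto
qed

lemma inv_diag_matrix_transpose_diag_matrix_eqI:
  assumes F: "F \<in> carrier_mat n n" and w: "\<And>i. i < n \<Longrightarrow> w i \<noteq> 0"
    and sym: "\<And>i j. i < n \<Longrightarrow> j < n \<Longrightarrow> w i * F $$ (i, j) = w j * F $$ (j, i)"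
  shows "inv_mat (diag_matrix n w) * transpose_mat F * diag_matrix n w = F"
proof -
  have "inv_mat (diag_matrix n w) = diag_matrix n (\<lambda>i. 1 / w i)"
    using w by (rule inv_mat_diag_matrix)
  then have "inv_mat (diag_matrix n w) * transpose_mat F * diag_matrix n w
      = mat n n (\<lambda>(i, j). 1 / w i * F $$ (j, i) * w j)"
    using diag_matrix_transpose_diag_matrix_eq[OF F] by simp
  also have "\<dots> = F"
    using F sym w by (intro eq_matI) (auto simp: field_simps)
  finally show ?thesis .
qed

lemma self_adjoint_diag_similarity:
  fixes \<sigma> e w :: "nat \<Rightarrow> real"
  assumes V: "V \<in> carrier_mat n n" and w: "\<And>i. i < n \<Longrightarrow> w i \<noteq> 0"
    and orth: "V * (diag_matrix n e * transpose_mat V * diag_matrix n w) = 1\<^sub>m n"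
  defines "F \<equiv> V * diag_matrix n \<sigma> * inv_mat V"
  shows "inv_mat (diag_matrix n w) * transpose_mat F * diag_matrix n w = F"
proof (rule inv_diag_matrix_transpose_diag_matrix_eqI)
  have "inv_mat V = mat n n (\<lambda>(k, j). e k * V $$ (j, k) * w j)"
    using V orth by (intro inv_mat_eqI) (simp_all add: diag_matrix_transpose_diag_matrix_eq)
  moreover have "V * diag_matrix n \<sigma> = mat n n (\<lambda>(i, k). V $$ (i, k) * \<sigma> k)"
    unfolding diag_matrix_eq_mat_diag using V by (rule mat_diag_mult_right)
  ultimately have F_eq:
    "F = mat n n (\<lambda>(i, k). V $$ (i, k) * \<sigma> k) * mat n n (\<lambda>(k, j). e k * V $$ (j, k) * w j)"
    unfolding F_def by simp
  then show "F \<in> carrier_mat n n"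
    by (simp add: mult_carrier_mat[of _ n n])
  have "F $$ (i, j) = (\<Sum>k<n. V $$ (i, k) * (\<sigma> k * e k) * V $$ (j, k)) * w j"
    if "i < n" "j < n" for i j
    using that by (auto simp: F_eq scalar_prod_def atLeast0LessThan sum_distrib_right intro!: sum.cong)
  then show "w i * F $$ (i, j) = w j * F $$ (j, i)" if "i < n" "j < n" for i j
    using that by (simp add: mult_ac)
qed (rule w)

section \<open>Legendre polynomials\<close>

lemma poly_legendre_Suc_Suc:
  "(real n + 2) * poly (legendre (Suc (Suc n))) x
    = (2 * real n + 3) * x * poly (legendre (Suc n)) x - (real n + 1) * poly (legendre n) x"
  by (simp add: field_simps)

lemma poly_pderiv_legendre_Suc_Suc:
  "(real n + 2) * poly (pderiv (legendre (Suc (Suc n)))) x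
    = (2 * real n + 3) * (poly (legendre (Suc n)) x + x * poly (pderiv (legendre (Suc n))) x)
      - (real n + 1) * poly (pderiv (legendre n)) x"
  by (simp add: pderiv_smult pderiv_diff pderiv_mult pderiv_pCons field_simps del: legendre.simps(1,2))

declare legendre.simps(3) [simp del]

lemma degree_legendre_le: "degree (legendre n) \<le> n"
proof (induction n rule: legendre.induct)
  case (3 n)
  have "degree ([:0, 1:] * legendre (Suc n)) \<le> Suc (Suc n)"
    using degree_mult_le[of "[:0, 1:]" "legendre (Suc n)"] 3 by simp
  moreover have "degree (legendre n) \<le> Suc (Suc n)"
    using 3 by simp
  ultimately show ?case
    unfolding legendre.simps(3) by (meson degree_diff_le degree_smult_le order.trans)
qed simp_all

lemma poly_legendre_one: "poly (legendre n) 1 = 1"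
  by (induction n rule: legendre.induct) (simp_all add: legendre.simps(3) field_simps)

lemma poly_legendre_minus_one: "poly (legendre n) (-1) = (-1) ^ n"
  by (induction n rule: legendre.induct) (simp_all add: legendre.simps(3) field_simps)

lemma legendre_pderiv_identities:
  "x * poly (pderiv (legendre (Suc n))) x - poly (pderiv (legendre n)) x
      = (real n + 1) * poly (legendre (Suc n)) x
   \<and> poly (pderiv (legendre (Suc n))) x - x * poly (pderiv (legendre n)) x
      = (real n + 1) * poly (legendre n) x"
proof (induction n)
  case 0
  show ?case by (simp add: pderiv_pCons)
next
  case (Suc n)
  let ?p = "\<lambda>k. poly (legendre k) x" and ?d = "\<lambda>k. poly (pderiv (legendre k)) x"
  let ?m = "real n + 1"
  have e1: "x * ?d (Suc n) - ?d n - ?m * ?p (Suc n) = 0"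
    and e2: "?d (Suc n) - x * ?d n - ?m * ?p n = 0"
    using Suc.IH by simp_all
  have "(?m + 1) * (x * ?d (Suc (Suc n)) - ?d (Suc n) - (?m + 1) * ?p (Suc (Suc n)))
      = x * ((real n + 2) * ?d (Suc (Suc n))) - (?m + 1) * ?d (Suc n)
        - (?m + 1) * ((real n + 2) * ?p (Suc (Suc n)))"
    by (simp add: algebra_simps)
  also have "\<dots> = (2 * ?m + 1) * x * (x * ?d (Suc n) - ?d n - ?m * ?p (Suc n))
        - (?m + 1) * (?d (Suc n) - x * ?d n - ?m * ?p n)"
    unfolding poly_legendre_Suc_Suc poly_pderiv_legendre_Suc_Suc by (simp add: algebra_simps)
  also have "\<dots> = 0"
    unfolding e1 e2 by simp
  finally have pderiv_identity: "x * ?d (Suc (Suc n)) - ?d (Suc n) = (?m + 1) * ?p (Suc (Suc n))"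
    by simp
  have "(?m + 1) * (?d (Suc (Suc n)) - x * ?d (Suc n) - (?m + 1) * ?p (Suc n))
      = (real n + 2) * ?d (Suc (Suc n)) - (?m + 1) * x * ?d (Suc n) - (?m + 1) * (?m + 1) * ?p (Suc n)"
    by (simp add: algebra_simps)
  also have "\<dots> = ?m * (x * ?d (Suc n) - ?d n - ?m * ?p (Suc n))"
    unfolding poly_pderiv_legendre_Suc_Suc by (simp add: algebra_simps)
  also have "\<dots> = 0"
    unfolding e1 by simp
  finally have "?d (Suc (Suc n)) - x * ?d (Suc n) = (?m + 1) * ?p (Suc n)"
    by simp
  with pderiv_identity show ?case
    by simp
qed

lemma poly_legendre_at_lgl_node:
  assumes "\<xi> \<in> lgl_nodes (Suc n)"
  shows "poly (legendre n) \<xi> = \<xi> * poly (legendre (Suc n)) \<xi>"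
proof -
  let ?d = "\<lambda>k. poly (pderiv (legendre k)) \<xi>"
  have "(real n + 1) * (poly (legendre n) \<xi> - \<xi> * poly (legendre (Suc n)) \<xi>)
      = (?d (Suc n) - \<xi> * ?d n) - \<xi> * (\<xi> * ?d (Suc n) - ?d n)"
    unfolding legendre_pderiv_identities[THEN conjunct1] legendre_pderiv_identities[THEN conjunct2]
    by (simp add: algebra_simps)
  also have "\<dots> = (1 - \<xi>\<^sup>2) * ?d (Suc n)"
    by (simp add: algebra_simps power2_eq_square)
  also have "\<dots> = 0"
    using assms unfolding lgl_nodes_def by auto
  finally show ?thesis
    by simp
qed

lemma legendre_christoffel_darboux:
  "(x - y) * (\<Sum>k\<le>n. (2 * real k + 1) * poly (legendre k) x * poly (legendre k) y)
    = (real n + 1) * (poly (legendre (Suc n)) x * poly (legendre n) y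
                      - poly (legendre n) x * poly (legendre (Suc n)) y)"
proof (induction n)
  case (Suc n)
  let ?p = "\<lambda>k. poly (legendre k)"
  have "(x - y) * (\<Sum>k\<le>Suc n. (2 * real k + 1) * ?p k x * ?p k y)
      = (real n + 1) * (?p (Suc n) x * ?p n y - ?p n x * ?p (Suc n) y)
        + (2 * real n + 3) * (x - y) * ?p (Suc n) x * ?p (Suc n) y"
    using Suc.IH by (simp add: algebra_simps)
  also have "\<dots> = ((real n + 2) * ?p (Suc (Suc n)) x) * ?p (Suc n) y
      - ?p (Suc n) x * ((real n + 2) * ?p (Suc (Suc n)) y)"
    unfolding poly_legendre_Suc_Suc by (simp add: algebra_simps)
  finally show ?case
    by (simp add: algebra_simps)
qed (simp add: algebra_simps)

lemma legendre_christoffel_darboux_confluent: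
  "(\<Sum>k\<le>n. (2 * real k + 1) * (poly (legendre k) x)\<^sup>2)
    = (real n + 1) * (poly (pderiv (legendre (Suc n))) x * poly (legendre n) x
                      - poly (pderiv (legendre n)) x * poly (legendre (Suc n)) x)"
proof (induction n)
  case (Suc n)
  let ?p = "\<lambda>k. poly (legendre k) x" and ?d = "\<lambda>k. poly (pderiv (legendre k)) x"
  have "(\<Sum>k\<le>Suc n. (2 * real k + 1) * (?p k)\<^sup>2)
      = (real n + 1) * (?d (Suc n) * ?p n - ?d n * ?p (Suc n)) + (2 * real n + 3) * (?p (Suc n))\<^sup>2"
    using Suc.IH by (simp add: algebra_simps)
  also have "\<dots> = ((real n + 2) * ?d (Suc (Suc n))) * ?p (Suc n) - ?d (Suc n) * ((real n + 2) * ?p (Suc (Suc n)))"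
    unfolding poly_legendre_Suc_Suc poly_pderiv_legendre_Suc_Suc by (simp add: algebra_simps power2_eq_square)
  finally show ?case
    by (simp add: algebra_simps)
qed (simp add: pderiv_pCons)

text \<open>Twice the reproducing kernel of the discrete LGL inner product on polynomials of degree
  \<open>\<le> N\<close>. The quadrature integrates \<open>P\<^sub>k\<^sup>2\<close> exactly for \<open>k < N\<close>, but gives \<open>2/N\<close>
  instead of \<open>2/(2N + 1)\<close> for \<open>P\<^sub>N\<^sup>2\<close>, whence the last coefficient \<open>N\<close>.\<close>
definition lgl_kernel :: "nat \<Rightarrow> real \<Rightarrow> real \<Rightarrow> real" where
  "lgl_kernel N x y = (\<Sum>k<N. (2 * real k + 1) * poly (legendre k) x * poly (legendre k) y)
     + real N * poly (legendre N) x * poly (legendre N) y"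

lemma lgl_kernel_off_diagonal:
  assumes "\<xi> \<in> lgl_nodes (Suc n)" "\<eta> \<in> lgl_nodes (Suc n)" "\<xi> \<noteq> \<eta>"
  shows "lgl_kernel (Suc n) \<xi> \<eta> = 0"
proof -
  let ?p = "\<lambda>k. poly (legendre k)"
  have "(\<xi> - \<eta>) * (\<Sum>k\<le>n. (2 * real k + 1) * ?p k \<xi> * ?p k \<eta>)
      = (\<xi> - \<eta>) * (- (real n + 1) * ?p (Suc n) \<xi> * ?p (Suc n) \<eta>)"
    unfolding legendre_christoffel_darboux poly_legendre_at_lgl_node[OF assms(1)]
      poly_legendre_at_lgl_node[OF assms(2)]
    by (simp add: algebra_simps)
  then have "(\<Sum>k\<le>n. (2 * real k + 1) * ?p k \<xi> * ?p k \<eta>)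
      = - (real n + 1) * ?p (Suc n) \<xi> * ?p (Suc n) \<eta>"
    using assms(3) by simp
  then show ?thesis
    by (simp add: lgl_kernel_def lessThan_Suc_atMost) (simp add: algebra_simps)
qed

lemma lgl_kernel_diagonal:
  assumes "\<xi> \<in> lgl_nodes (Suc n)"
  shows "lgl_kernel (Suc n) \<xi> \<xi> = (real n + 1) * (real n + 2) * (poly (legendre (Suc n)) \<xi>)\<^sup>2"
proof -
  let ?p = "\<lambda>k. poly (legendre k) \<xi>" and ?d = "\<lambda>k. poly (pderiv (legendre k)) \<xi>"
  have "(\<Sum>k\<le>n. (2 * real k + 1) * (?p k)\<^sup>2)
      = (real n + 1) * ?p (Suc n) * (\<xi> * ?d (Suc n) - ?d n)"
    unfolding legendre_christoffel_darboux_confluent poly_legendre_at_lgl_node[OF assms]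
    by (simp add: algebra_simps)
  also have "\<dots> = (real n + 1) * (real n + 1) * (?p (Suc n))\<^sup>2"
    using legendre_pderiv_identities[of \<xi> n] by (simp add: power2_eq_square)
  finally show ?thesis
    by (simp add: lgl_kernel_def lessThan_Suc_atMost power2_eq_square algebra_simps)
qed

lemma lgl_kernel_diagonal_ge_one: "lgl_kernel (Suc n) x x \<ge> 1"
proof -
  have "(\<Sum>k<Suc n. (2 * real k + 1) * poly (legendre k) x * poly (legendre k) x)
      = 1 + (\<Sum>k<n. (2 * real (Suc k) + 1) * (poly (legendre (Suc k)) x)\<^sup>2)"
    by (subst sum.lessThan_Suc_shift) (simp add: power2_eq_square mult.assoc del: of_nat_Suc)
  moreover have "0 \<le> (\<Sum>k<n. (2 * real (Suc k) + 1) * (poly (legendre (Suc k)) x)\<^sup>2)"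
    by (intro sum_nonneg) simp
  moreover have "0 \<le> real (Suc n) * poly (legendre (Suc n)) x * poly (legendre (Suc n)) x"
    by (simp add: mult.assoc)
  ultimately show ?thesis
    unfolding lgl_kernel_def by linarith
qed

section \<open>Zeros of Legendre polynomials\<close>

lemma strict_mono_on_choose_between:
  fixes a :: "nat \<Rightarrow> 'a::linorder"
  assumes a: "strict_mono_on {..n} a"
    and ex: "\<And>k. k < n \<Longrightarrow> \<exists>y. a k < y \<and> y < a (Suc k) \<and> Q y"
  shows "\<exists>y. strict_mono_on {..<n} y \<and> (\<forall>k<n. a k < y k \<and> y k < a (Suc k) \<and> Q (y k))"
proof -
  obtain y where y: "\<And>k. k < n \<Longrightarrow> a k < y k \<and> y k < a (Suc k) \<and> Q (y k)"
    using ex by metis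
  have "y i < y j" if "i < j" "j < n" for i j
  proof -
    have "y i < a (Suc i)"
      using y that by simp
    also have "a (Suc i) \<le> a j"
      using that by (intro strict_mono_on_leD[OF a]) auto
    also have "a j < y j"
      using y that by simp
    finally show ?thesis .
  qed
  then show ?thesis
    using y by (intro exI[of _ y]) (auto intro: strict_mono_onI)
qed

lemma poly_roots_between_sign_changes:
  fixes p :: "real poly"
  assumes a: "strict_mono_on {..n} a"
    and sign: "\<And>k. k \<le> n \<Longrightarrow> (-1) ^ (n - k) * poly p (a k) > 0"
  shows "\<exists>y. strict_mono_on {..<n} y \<and> (\<forall>k<n. a k < y k \<and> y k < a (Suc k) \<and> poly p (y k) = 0)"
proof (rule strict_mono_on_choose_between[OF a])
  fix k assume k: "k < n"
  let ?s = "(-1 :: real) ^ (n - Suc k)"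
  have "n - k = Suc (n - Suc k)"
    using k by simp
  then have "0 < - ?s * poly p (a k)" "0 < ?s * poly p (a (Suc k))"
    using sign[of k] sign[of "Suc k"] k by simp_all
  then have "0 < (- ?s * poly p (a k)) * (?s * poly p (a (Suc k)))"
    by (rule mult_pos_pos)
  then have "poly p (a k) * poly p (a (Suc k)) < 0"
    by (simp add: algebra_simps)
  moreover have "a k < a (Suc k)"
    using k by (intro strict_mono_onD[OF a]) auto
  ultimately show "\<exists>y. a k < y \<and> y < a (Suc k) \<and> poly p y = 0"
    using poly_IVT by blast
qed

lemma poly_pderiv_roots_between_roots:
  fixes p :: "real poly"
  assumes x: "strict_mono_on {..n} x" and roots: "\<And>i. i \<le> n \<Longrightarrow> poly p (x i) = 0"
  shows "\<exists>z. strict_mono_on {..<n} z \<and> (\<forall>k<n. x k < z k \<and> z k < x (Suc k) \<and> poly (pderiv p) (z k) = 0)"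
proof (rule strict_mono_on_choose_between[OF x])
  fix k assume k: "k < n"
  have lt: "x k < x (Suc k)"
    using k by (intro strict_mono_onD[OF x]) auto
  then obtain z where z: "x k < z" "z < x (Suc k)"
    and mvt: "poly p (x (Suc k)) - poly p (x k) = (x (Suc k) - x k) * poly (pderiv p) z"
    using poly_MVT by blast
  have "(x (Suc k) - x k) * poly (pderiv p) z = 0"
    using mvt roots[of k] roots[of "Suc k"] k by simp
  then have "poly (pderiv p) z = 0"
    using lt by simp
  with z show "\<exists>z. x k < z \<and> z < x (Suc k) \<and> poly (pderiv p) z = 0"
    by blast
qed

lemma prod_diff_sign:
  fixes x :: "nat \<Rightarrow> 'a::linordered_idom"
  assumes k: "k \<le> Suc m"
    and below: "\<And>i. i < k \<Longrightarrow> x i < y" and above: "\<And>i. k \<le> i \<Longrightarrow> i \<le> m \<Longrightarrow> y < x i"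
  shows "(-1) ^ (Suc m - k) * (\<Prod>i\<le>m. y - x i) > 0"
proof -
  have split: "{..m} = {..<k} \<union> {k..m}"
    using k by auto
  have "(\<Prod>i\<le>m. y - x i) = (\<Prod>i<k. y - x i) * (\<Prod>i\<in>{k..m}. y - x i)"
    unfolding split by (rule prod.union_disjoint) auto
  also have "(\<Prod>i\<in>{k..m}. y - x i) = (-1) ^ (Suc m - k) * (\<Prod>i\<in>{k..m}. x i - y)"
    by (subst prod_diff_swap) simp
  finally have "(\<Prod>i\<le>m. y - x i)
      = (\<Prod>i<k. y - x i) * ((-1) ^ (Suc m - k) * (\<Prod>i\<in>{k..m}. x i - y))" .
  then have "(-1) ^ (Suc m - k) * (\<Prod>i\<le>m. y - x i) = (\<Prod>i<k. y - x i) * (\<Prod>i\<in>{k..m}. x i - y)"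
    by (simp add: mult.left_commute)
  moreover have "(\<Prod>i<k. y - x i) > 0" "(\<Prod>i\<in>{k..m}. x i - y) > 0"
    using below above by (auto intro: prod_pos)
  ultimately show ?thesis
    by simp
qed

lemma poly_eq_smult_prod_roots:
  fixes p :: "'a::idom poly"
  assumes "degree p \<le> Suc m" "inj_on x {..m}" "\<And>i. i \<le> m \<Longrightarrow> poly p (x i) = 0"
  shows "p = Polynomial.smult (coeff p (Suc m)) (\<Prod>i\<le>m. [:- x i, 1:])"
proof (rule poly_eqI_degree_lead_coeff[where A = "x ` {..m}" and n = "Suc m"])
  have "degree (\<Prod>i\<le>m. [:- x i, 1:]) = Suc m"
    by (subst degree_prod_sum_eq) auto
  moreover have "coeff (\<Prod>i\<le>m. [:- x i, 1:]) (Suc m) = 1"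
    using lead_coeff_prod[of "\<lambda>i. [:- x i, 1:]" "{..m}"] calculation by simp
  ultimately show "coeff p (Suc m) = coeff (Polynomial.smult (coeff p (Suc m)) (\<Prod>i\<le>m. [:- x i, 1:])) (Suc m)"
    and "degree (Polynomial.smult (coeff p (Suc m)) (\<Prod>i\<le>m. [:- x i, 1:])) \<le> Suc m"
    by (simp_all add: degree_smult_le order.trans)
  show "Suc m \<le> card (x ` {..m})"
    using card_image[OF assms(2)] by simp
  show "poly p z = poly (Polynomial.smult (coeff p (Suc m)) (\<Prod>i\<le>m. [:- x i, 1:])) z"
    if "z \<in> x ` {..m}" for z
    using that assms(3) by (auto simp: poly_prod)
qed (rule assms(1))

lemma poly_sign_between_roots:
  fixes p :: "real poly"
  assumes deg: "degree p \<le> Suc m" and x: "strict_mono_on {..m} x"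
    and roots: "\<And>i. i \<le> m \<Longrightarrow> poly p (x i) = 0"
    and b: "\<And>i. i \<le> m \<Longrightarrow> x i < b" and pb: "poly p b > 0"
    and k: "k \<le> Suc m"
    and below: "\<And>i. i < k \<Longrightarrow> x i < y" and above: "\<And>i. k \<le> i \<Longrightarrow> i \<le> m \<Longrightarrow> y < x i"
  shows "(-1) ^ (Suc m - k) * poly p y > 0"
proof -
  let ?c = "coeff p (Suc m)"
  have p: "p = Polynomial.smult ?c (\<Prod>i\<le>m. [:- x i, 1:])"
    using deg strict_mono_on_imp_inj_on[OF x] roots by (rule poly_eq_smult_prod_roots)
  have poly_p: "poly p t = ?c * (\<Prod>i\<le>m. t - x i)" for t
    by (subst p) (simp add: poly_prod)
  have "0 < (\<Prod>i\<le>m. b - x i)"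
    using prod_diff_sign[of "Suc m" m x b] b by simp
  then have "?c > 0"
    using pb by (simp add: poly_p zero_less_mult_iff)
  moreover have "(-1) ^ (Suc m - k) * (\<Prod>i\<le>m. y - x i) > 0"
    using k below above by (rule prod_diff_sign)
  ultimately show ?thesis
    by (simp add: poly_p mult.left_commute)
qed

text \<open>The interlacing invariant propagated by the three-term recurrence.\<close>
definition legendre_zeros_interlace :: "nat \<Rightarrow> (nat \<Rightarrow> real) \<Rightarrow> bool" where
  "legendre_zeros_interlace m x \<longleftrightarrow> strict_mono_on {..m} x \<and>
     (\<forall>i\<le>m. poly (legendre (Suc m)) (x i) = 0 \<and> -1 < x i \<and> x i < 1
        \<and> (-1) ^ (m - i) * poly (legendre m) (x i) > 0)"

definition extend_by_endpoints :: "nat \<Rightarrow> (nat \<Rightarrow> real) \<Rightarrow> nat \<Rightarrow> real" where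
  "extend_by_endpoints m x k = (if k = 0 then -1 else if k \<le> Suc m then x (k - 1) else 1)"

lemma strict_mono_on_extend_by_endpoints:
  assumes x: "strict_mono_on {..m} x" and bounds: "\<And>i. i \<le> m \<Longrightarrow> -1 < x i \<and> x i < 1"
  shows "strict_mono_on {..Suc (Suc m)} (extend_by_endpoints m x)"
proof (rule strict_mono_onI)
  fix i j assume "i \<in> {..Suc (Suc m)}" "j \<in> {..Suc (Suc m)}" "i < j"
  then show "extend_by_endpoints m x i < extend_by_endpoints m x j"
    using bounds strict_mono_onD[OF x, of "i - 1" "j - 1"] by (auto simp: extend_by_endpoints_def)
qed

lemma extend_by_endpoints_bounds:
  assumes "\<And>i. i \<le> m \<Longrightarrow> -1 < x i \<and> x i < 1"
  shows "-1 \<le> extend_by_endpoints m x k \<and> extend_by_endpoints m x k \<le> 1"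
  using assms[of "k - 1"] by (auto simp: extend_by_endpoints_def less_imp_le)

lemma legendre_sign_at_extended_zeros:
  assumes x: "legendre_zeros_interlace m x" and k: "k \<le> Suc (Suc m)"
  shows "(-1) ^ (Suc (Suc m) - k) * poly (legendre (Suc (Suc m))) (extend_by_endpoints m x k) > 0"
proof -
  consider "k = 0" | i where "k = Suc i" "i \<le> m" | "k = Suc (Suc m)"
    using k by (cases k) (auto simp: le_Suc_eq)
  then show ?thesis
  proof cases
    case 1
    then show ?thesis
      by (simp add: extend_by_endpoints_def poly_legendre_minus_one)
  next
    case (2 i)
    have "poly (legendre (Suc m)) (x i) = 0"
      using x 2 by (simp add: legendre_zeros_interlace_def)
    then have rec: "(real m + 2) * poly (legendre (Suc (Suc m))) (x i)
        = - ((real m + 1) * poly (legendre m) (x i))"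
      using poly_legendre_Suc_Suc[of m "x i"] by simp
    have "(real m + 2)
        * ((-1) ^ (Suc (Suc m) - k) * poly (legendre (Suc (Suc m))) (extend_by_endpoints m x k))
        = (-1) ^ Suc (m - i) * ((real m + 2) * poly (legendre (Suc (Suc m))) (x i))"
      using 2 by (simp add: extend_by_endpoints_def Suc_diff_le)
    also have "\<dots> = (real m + 1) * ((-1) ^ (m - i) * poly (legendre m) (x i))"
      unfolding rec by simp
    also have "\<dots> > 0"
      using x 2 by (simp add: legendre_zeros_interlace_def)
    finally show ?thesis
      by (rule zero_less_mult_pos) simp
  next
    case 3
    then show ?thesis
      by (simp add: extend_by_endpoints_def poly_legendre_one)
  qed
qed

lemma legendre_sign_between_zeros:
  assumes x: "legendre_zeros_interlace m x" and k: "k \<le> Suc m"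
    and below: "\<And>i. i < k \<Longrightarrow> x i < t" and above: "\<And>i. k \<le> i \<Longrightarrow> i \<le> m \<Longrightarrow> t < x i"
  shows "(-1) ^ (Suc m - k) * poly (legendre (Suc m)) t > 0"
proof (rule poly_sign_between_roots[OF degree_legendre_le _ _ _ _ k below above])
  show "strict_mono_on {..m} x"
    using x by (simp add: legendre_zeros_interlace_def)
  show "poly (legendre (Suc m)) (x i) = 0" "x i < 1" if "i \<le> m" for i
    using x that by (simp_all add: legendre_zeros_interlace_def)
  show "poly (legendre (Suc m)) 1 > 0"
    by (simp add: poly_legendre_one)
qed

lemma legendre_zeros_interlace_Suc:
  assumes x: "legendre_zeros_interlace m x"
  shows "\<exists>y. legendre_zeros_interlace (Suc m) y"
proof -
  let ?a = "extend_by_endpoints m x"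
  have x_bounds: "\<And>i. i \<le> m \<Longrightarrow> -1 < x i \<and> x i < 1"
    using x by (simp add: legendre_zeros_interlace_def)
  have a_bounds: "-1 \<le> ?a k \<and> ?a k \<le> 1" for k
    using x_bounds by (rule extend_by_endpoints_bounds)
  have a_mono: "strict_mono_on {..Suc (Suc m)} ?a"
    using x x_bounds by (intro strict_mono_on_extend_by_endpoints) (simp_all add: legendre_zeros_interlace_def)
  obtain y where y_mono: "strict_mono_on {..<Suc (Suc m)} y"
    and y: "\<And>k. k < Suc (Suc m) \<Longrightarrow>
      ?a k < y k \<and> y k < ?a (Suc k) \<and> poly (legendre (Suc (Suc m))) (y k) = 0"
    using poly_roots_between_sign_changes[OF a_mono legendre_sign_at_extended_zeros[OF x]] by blast
  have "legendre_zeros_interlace (Suc m) y"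
    unfolding legendre_zeros_interlace_def
  proof (intro conjI allI impI)
    show "strict_mono_on {..Suc m} y"
      using y_mono by (simp add: lessThan_Suc_atMost)
    fix k assume k: "k \<le> Suc m"
    show "poly (legendre (Suc (Suc m))) (y k) = 0" "-1 < y k" "y k < 1"
      using y[of k] a_bounds[of k] a_bounds[of "Suc k"] k by auto
    show "(-1) ^ (Suc m - k) * poly (legendre (Suc m)) (y k) > 0"
    proof (rule legendre_sign_between_zeros[OF x k])
      fix i
      assume "i < k"
      then have "x i = ?a (Suc i)"
        using k by (simp add: extend_by_endpoints_def)
      also have "\<dots> \<le> ?a k"
        using \<open>i < k\<close> k by (intro strict_mono_on_leD[OF a_mono]) auto
      also have "\<dots> < y k"
        using y[of k] k by simp
      finally show "x i < y k" .
    next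
      fix i
      assume "k \<le> i" "i \<le> m"
      have "y k < ?a (Suc k)"
        using y[of k] k by simp
      also have "\<dots> \<le> ?a (Suc i)"
        using \<open>k \<le> i\<close> \<open>i \<le> m\<close> by (intro strict_mono_on_leD[OF a_mono]) auto
      also have "\<dots> = x i"
        using \<open>i \<le> m\<close> by (simp add: extend_by_endpoints_def)
      finally show "y k < x i" .
    qed
  qed
  then show ?thesis
    by blast
qed

lemma legendre_zeros_interlace_exists: "\<exists>x. legendre_zeros_interlace m x"
proof (induction m)
  case 0
  have "legendre_zeros_interlace 0 (\<lambda>_. 0)"
    by (auto simp: legendre_zeros_interlace_def intro: strict_mono_onI)
  then show ?case
    by blast
next
  case (Suc m)
  then show ?case
    using legendre_zeros_interlace_Suc by blast
qed

section \<open>LGL nodes and weights\<close>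

lemma pderiv_legendre_Suc_nonzero: "pderiv (legendre (Suc n)) \<noteq> 0"
proof
  assume "pderiv (legendre (Suc n)) = 0"
  then have "degree (legendre (Suc n)) = 0"
    by (simp add: pderiv_eq_0_iff)
  then obtain c where c: "legendre (Suc n) = [:c:]"
    by (rule degree_eq_zeroE)
  obtain x where "legendre_zeros_interlace n x"
    using legendre_zeros_interlace_exists by blast
  then have "poly (legendre (Suc n)) (x 0) = 0"
    by (simp add: legendre_zeros_interlace_def)
  then show False
    using poly_legendre_one[of "Suc n"] c by simp
qed

lemma finite_lgl_nodes: "finite (lgl_nodes (Suc n))"
  unfolding lgl_nodes_def using poly_roots_finite[OF pderiv_legendre_Suc_nonzero] by simp

lemma card_lgl_nodes_ge: "Suc (Suc n) \<le> card (lgl_nodes (Suc n))"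
proof -
  obtain x where "legendre_zeros_interlace n x"
    using legendre_zeros_interlace_exists by blast
  then have x_mono: "strict_mono_on {..n} x"
    and x: "\<And>i. i \<le> n \<Longrightarrow> poly (legendre (Suc n)) (x i) = 0 \<and> -1 < x i \<and> x i < 1"
    by (simp_all add: legendre_zeros_interlace_def)
  obtain z where z_mono: "strict_mono_on {..<n} z"
    and z: "\<And>k. k < n \<Longrightarrow> x k < z k \<and> z k < x (Suc k) \<and> poly (pderiv (legendre (Suc n))) (z k) = 0"
    using poly_pderiv_roots_between_roots[OF x_mono] x by blast
  have z_bounds: "-1 < z k \<and> z k < 1" if k: "k < n" for k
  proof -
    have "x k < z k" "z k < x (Suc k)"
      using z[OF k] by simp_all
    moreover have "-1 < x k" "x (Suc k) < 1"
      using x[of k] x[of "Suc k"] k by simp_all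
    ultimately show ?thesis
      by linarith
  qed
  have "{-1, 1} \<inter> z ` {..<n} = {}"
  proof (rule equals0I)
    fix t assume "t \<in> {-1, 1} \<inter> z ` {..<n}"
    then obtain k where "k < n" "t = z k" "t = -1 \<or> t = 1"
      by auto
    then show False
      using z_bounds[of k] by auto
  qed
  then have "card ({-1, 1} \<union> z ` {..<n}) = card {-1, 1 :: real} + card (z ` {..<n})"
    by (intro card_Un_disjoint) simp_all
  also have "\<dots> = Suc (Suc n)"
    using card_image[OF strict_mono_on_imp_inj_on[OF z_mono]] by simp
  finally have "card ({-1, 1} \<union> z ` {..<n}) = Suc (Suc n)" .
  moreover have "card ({-1, 1} \<union> z ` {..<n}) \<le> card (lgl_nodes (Suc n))"
  proof (rule card_mono[OF finite_lgl_nodes])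
    show "{-1, 1} \<union> z ` {..<n} \<subseteq> lgl_nodes (Suc n)"
      unfolding lgl_nodes_def using z by blast
  qed
  ultimately show ?thesis
    by simp
qed

lemma lgl_node_mem:
  assumes "i \<le> Suc n"
  shows "lgl_node (Suc n) i \<in> lgl_nodes (Suc n)"
proof -
  let ?xs = "sorted_list_of_set (lgl_nodes (Suc n))"
  have "i < length ?xs"
    using assms card_lgl_nodes_ge[of n] by simp
  then have "?xs ! i \<in> set ?xs"
    by (rule nth_mem)
  then show ?thesis
    using finite_lgl_nodes[of n] by (simp add: lgl_node_def)
qed

lemma inj_on_lgl_node: "inj_on (lgl_node (Suc n)) {..Suc n}"
proof (rule inj_onI)
  let ?xs = "sorted_list_of_set (lgl_nodes (Suc n))"
  fix i j assume "i \<in> {..Suc n}" "j \<in> {..Suc n}" and eq: "lgl_node (Suc n) i = lgl_node (Suc n) j"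
  then have "i < length ?xs" "j < length ?xs"
    using card_lgl_nodes_ge[of n] by simp_all
  moreover have "distinct ?xs"
    by simp
  ultimately show "i = j"
    using eq nth_eq_iff_index_eq unfolding lgl_node_def by blast
qed

lemma lgl_weight_eq_inverse_kernel:
  assumes "i \<le> Suc n"
  shows "lgl_weight (Suc n) i = 2 / lgl_kernel (Suc n) (lgl_node (Suc n) i) (lgl_node (Suc n) i)"
  unfolding lgl_kernel_diagonal[OF lgl_node_mem[OF assms]] lgl_weight_def
  by (simp add: add.commute)

lemma lgl_weight_nonzero:
  assumes "N \<ge> 1" "i < N + 1"
  shows "lgl_weight N i \<noteq> 0"
proof -
  obtain n where N: "N = Suc n"
    using assms(1) by (cases N) auto
  let ?\<xi> = "lgl_node N i"
  have "lgl_kernel N ?\<xi> ?\<xi> \<ge> 1"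
    unfolding N by (rule lgl_kernel_diagonal_ge_one)
  moreover have "lgl_weight N i = 2 / lgl_kernel N ?\<xi> ?\<xi>"
    using assms(2) unfolding N by (intro lgl_weight_eq_inverse_kernel) simp
  ultimately show ?thesis
    by simp
qed

text \<open>The reciprocal of the discrete squared norm \<open>\<Sum>\<^sub>i \<omega>\<^sub>i L\<^sub>k(\<xi>\<^sub>i)\<^sup>2\<close> of \<open>L\<^sub>k\<close>.\<close>
definition lgl_inv_norm :: "nat \<Rightarrow> nat \<Rightarrow> real" where
  "lgl_inv_norm N k = (if k < N then 1 else real N / (2 * real N + 1))"

lemma sum_norm_legendre_lgl_inv_norm:
  "(\<Sum>k<N + 1. norm_legendre k x * lgl_inv_norm N k * norm_legendre k y) = lgl_kernel N x y / 2"
proof -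
  have "norm_legendre k x * lgl_inv_norm N k * norm_legendre k y
      = (if k < N then 2 * real k + 1 else real N) / 2 * poly (legendre k) x * poly (legendre k) y"
    if "k < N + 1" for k
  proof -
    have "norm_legendre k x * lgl_inv_norm N k * norm_legendre k y
        = (sqrt ((2 * real k + 1) / 2) * sqrt ((2 * real k + 1) / 2)) * lgl_inv_norm N k
          * poly (legendre k) x * poly (legendre k) y"
      unfolding norm_legendre_def by (simp only: mult_ac)
    also have "\<dots> = (2 * real k + 1) / 2 * lgl_inv_norm N k * poly (legendre k) x * poly (legendre k) y"
      by simp
    also have "(2 * real k + 1) / 2 * lgl_inv_norm N k = (if k < N then 2 * real k + 1 else real N) / 2"
    proof (cases "k < N")
      case False
      then have "k = N"
        using that by simp
      moreover have "2 * real N + 1 \<noteq> 0"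
        by (smt (verit) of_nat_0_le_iff)
      ultimately show ?thesis
        by (simp add: lgl_inv_norm_def field_simps)
    qed (simp add: lgl_inv_norm_def)
    finally show ?thesis .
  qed
  then have "(\<Sum>k<N + 1. norm_legendre k x * lgl_inv_norm N k * norm_legendre k y)
      = (\<Sum>k<N + 1. (if k < N then 2 * real k + 1 else real N) / 2 * poly (legendre k) x * poly (legendre k) y)"
    by (intro sum.cong) simp_all
  also have "\<dots> = lgl_kernel N x y / 2"
    by (simp add: lgl_kernel_def sum_divide_distrib add_divide_distrib)
  finally show ?thesis .
qed

lemma vander_mat_lgl_orthogonal:
  assumes "N \<ge> 1"
  shows "vander_mat N * (diag_matrix (N + 1) (lgl_inv_norm N) * transpose_mat (vander_mat N)
      * diag_matrix (N + 1) (lgl_weight N)) = 1\<^sub>m (N + 1)"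
proof -
  obtain n where N: "N = Suc n"
    using assms by (cases N) auto
  let ?\<xi> = "lgl_node N" and ?V = "vander_mat N"
  let ?W = "mat (N + 1) (N + 1) (\<lambda>(k, j). lgl_inv_norm N k * ?V $$ (j, k) * lgl_weight N j)"
  have V: "?V \<in> carrier_mat (N + 1) (N + 1)"
    by (simp add: vander_mat_def)
  have entry: "(?V * ?W) $$ (i, j) = lgl_kernel N (?\<xi> i) (?\<xi> j) / 2 * lgl_weight N j"
    if "i < N + 1" "j < N + 1" for i j
  proof -
    have "(?V * ?W) $$ (i, j)
        = (\<Sum>k<N + 1. norm_legendre k (?\<xi> i) * lgl_inv_norm N k * norm_legendre k (?\<xi> j))
          * lgl_weight N j"
      using that by (simp add: vander_mat_def scalar_prod_def atLeast0LessThan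
          sum_distrib_left sum_distrib_right distrib_left mult_ac)
    then show ?thesis
      by (simp only: sum_norm_legendre_lgl_inv_norm)
  qed
  show ?thesis
    unfolding diag_matrix_transpose_diag_matrix_eq[OF V]
  proof (rule eq_matI)
    fix i j assume "i < dim_row (1\<^sub>m (N + 1))" "j < dim_col (1\<^sub>m (N + 1))"
    then have ij: "i \<le> Suc n" "j \<le> Suc n"
      using N by auto
    show "(?V * ?W) $$ (i, j) = 1\<^sub>m (N + 1) $$ (i, j)"
    proof (cases "i = j")
      case True
      have "lgl_kernel N (?\<xi> j) (?\<xi> j) \<ge> 1"
        unfolding N by (rule lgl_kernel_diagonal_ge_one)
      then show ?thesis
        using True ij entry[of j j] lgl_weight_eq_inverse_kernel[OF ij(2)] N by simp
    next
      case False
      then have "?\<xi> i \<noteq> ?\<xi> j"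
        using inj_on_lgl_node[of n] ij N by (auto dest: inj_onD)
      then have "lgl_kernel N (?\<xi> i) (?\<xi> j) = 0"
        unfolding N by (intro lgl_kernel_off_diagonal lgl_node_mem ij)
      then show ?thesis
        using False ij entry[of i j] N by simp
    qed
  qed (simp_all add: vander_mat_def)
qed

theorem proposition1:
  fixes N :: nat and \<sigma> :: "nat \<Rightarrow> real"
  assumes "N \<ge> 1"
  shows "aux_filter_mat N \<sigma> = filter_mat N \<sigma>"
  unfolding aux_filter_mat_def filter_mat_def mass_mat_def
proof (rule self_adjoint_diag_similarity)
  show "vander_mat N \<in> carrier_mat (N + 1) (N + 1)"
    by (simp add: vander_mat_def)
  show "lgl_weight N i \<noteq> 0" if "i < N + 1" for i
    using assms that by (rule lgl_weight_nonzero)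
  show "vander_mat N * (diag_matrix (N + 1) (lgl_inv_norm N) * transpose_mat (vander_mat N)
      * diag_matrix (N + 1) (lgl_weight N)) = 1\<^sub>m (N + 1)"
    using assms by (rule vander_mat_lgl_orthogonal)
qed

end
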